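(* For every integer $k\ge 12$ with $k\not\equiv 2\pmod 3$, put $p_4=9k^2+17k+17$ and $q_4=9k^2+8k+9$. Then $p_4/q_4=[[2]^k,2+k,9]$, $q_4^{-1}=k^2+2k+2$, $\gcd(p_4,30)=1$, and the type $T=\{(2,1),(3,2),(5,4),(p_4,q_4)\}$ satisfies $K^2(T)=\frac{3k^2+139k+154}{15(9k^2+17k+17)}$ and $0<K^2(T)<3e_{\mathrm{orb}}(T)=\frac1{10}+\frac{3}{p_4}$; however, $Q_{X(2,1)}\oplus Q_{X(3,2)}\oplus Q_{X(5,4)}\oplus Q_{X(p_4,q_4)}$ admits no lattice embedding into $-\mathbb{Z}^{k+10}$.
   Context: $[2]^k$ denotes $k$ consecutive entries equal to $2$ in a Hirzebruch–Jung continued fraction $[a_1,\dots,a_\ell]=a_1-1/(a_2-1/(\cdots-1/a_\ell))$ ($a_i\ge2$). $q_4^{-1}$ is the inverse of $q_4$ mod $p_4$ in $(0,p_4)$. For coprime $p>q>0$ with $p/q=[a_1,\dots,a_\ell]$, $Q_{X(p,q)}$ is $\mathbb{Z}^\ell$ with basis $v_1,\dots,v_\ell$, $v_i\cdot v_i=-a_i$, $v_i\cdot v_{i+1}=1$, other products $0$. $-\mathbb{Z}^N$ is $\mathbb{Z}^N$ with $e_i\cdot e_j=-\delta_{ij}$; lattice embeddings are injective form-preserving $\mathbb{Z}$-linear maps. For a type $T=\{(p_i,q_i)\}_{i=1}^4$ write $p_i/(p_i-q_i)=[n_{i,1},\dots,n_{i,\ell_i}]$, $L=\sum\ell_i$;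 $K^2(T)=9-3L+\sum_{i,j}n_{i,j}-\sum_i\frac{q_i+q_i^{-1}-2}{p_i}$, $e_{\mathrm{orb}}(T)=3-\sum_i(1-1/p_i)$. *)

theory Defs
  imports "HOL-Number_Theory.Number_Theory"
begin

fun hj_val :: "int list \<Rightarrow> rat" where
  "hj_val [] = 0"
| "hj_val [a] = of_int a"
| "hj_val (a # as) = of_int a - 1 / hj_val as"

definition hj_cf :: "int \<Rightarrow> int \<Rightarrow> int list" where
  "hj_cf p q = (THE xs. xs \<noteq> [] \<and> (\<forall>a\<in>set xs. a \<ge> 2) \<and> hj_val xs = of_int p / of_int q)"

definition inv_mod :: "int \<Rightarrow> int \<Rightarrow> int" where
  "inv_mod p q = (THE x. 0 < x \<and> x < p \<and> [q * x = 1] (mod p))"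

definition K2 :: "(int \<times> int) list \<Rightarrow> real" where
  "K2 T = 9 - 3 * (\<Sum>(p,q)\<leftarrow>T. real (length (hj_cf p (p - q))))
           + (\<Sum>(p,q)\<leftarrow>T. of_int (sum_list (hj_cf p (p - q))))
           - (\<Sum>(p,q)\<leftarrow>T. (of_int q + of_int (inv_mod p q) - 2) / of_int p)"

definition e_orb :: "(int \<times> int) list \<Rightarrow> real" where
  "e_orb T = 3 - (\<Sum>(p,q)\<leftarrow>T. 1 - 1 / of_int p)"

text \<open>Integral lattices: Z^n with a symmetric bilinear form given by its Gram matrix
  on the standard basis (entries indexed by i,j < n).\<close>
type_synonym lattice = "nat \<times> (nat \<Rightarrow> nat \<Rightarrow> int)"

definition QX :: "int \<Rightarrow> int \<Rightarrow> lattice" where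
  "QX p q = (let as = hj_cf p q in
     (length as, \<lambda>i j. if i = j then - (as ! i)
                      else if i + 1 = j \<or> j + 1 = i then 1 else 0))"

definition orth_sum :: "lattice \<Rightarrow> lattice \<Rightarrow> lattice" (infixl "\<oplus>\<^sub>L" 65) where
  "orth_sum L1 L2 = (case L1 of (n1, G1) \<Rightarrow> case L2 of (n2, G2) \<Rightarrow>
     (n1 + n2, \<lambda>i j. if i < n1 \<and> j < n1 then G1 i j
                     else if n1 \<le> i \<and> n1 \<le> j then G2 (i - n1) (j - n1) else 0))"

definition neg_std :: "nat \<Rightarrow> lattice" where
  "neg_std N = (N, \<lambda>i j. if i = j then -1 else 0)"

text \<open>A lattice embedding: a Z-linear map, determined by the images E i of the basis
  vectors v_i (E i t = t-th coordinate), which preserves the form and is injective.\<close>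
definition lattice_embeds :: "lattice \<Rightarrow> lattice \<Rightarrow> bool" where
  "lattice_embeds L M = (case L of (m, G) \<Rightarrow> case M of (N, H) \<Rightarrow>
     (\<exists>E :: nat \<Rightarrow> nat \<Rightarrow> int.
        (\<forall>i<m. \<forall>j<m. (\<Sum>s<N. \<Sum>t<N. E i s * H s t * E j t) = G i j) \<and>
        (\<forall>c :: nat \<Rightarrow> int. (\<forall>t<N. (\<Sum>i<m. c i * E i t) = 0) \<longrightarrow> (\<forall>i<m. c i = 0))))"

end

theory Submission
  imports Defs
begin

text \<open>
  The one general tool is the value of a block of
  2's, \<open>[[2]\<^sup>n, rest] = ((n + 1) x - n) / (n (x - 1) + 1)\<close> with \<open>x = [rest]\<close>, together with
  uniqueness of Hirzebruch--Jung expansions (the head of \<open>[a, \<dots>]\<close> is the ceiling of its value).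

  For the lattice, the first \<open>k + 7\<close> basis vectors have square \<open>-2\<close> and form the diagram
  \<open>A\<^sub>1 \<oplus> A\<^sub>2 \<oplus> A\<^sub>4 \<oplus> A\<^sub>k\<close>. In \<open>-\<int>\<^sup>N\<close> a vector of square \<open>-2\<close> is \<open>\<plusminus>e\<^sub>s \<plusminus> e\<^sub>t\<close>, and the
  product of two of them has the parity of the number of coordinates they share. Any two
  non-adjacent vertices of this diagram are told apart by a third vertex adjacent to exactly one of
  them, which forces their images to have disjoint supports. Hence a path with \<open>\<ell>\<close> vertices
  occupies \<open>\<ell> + 1\<close> coordinates, and the four paths need \<open>k + 11 > k + 10\<close> of them.
\<close>

definition hj_admissible :: "int list \<Rightarrow> bool" where
  "hj_admissible xs \<longleftrightarrow> xs \<noteq> [] \<and> (\<forall>a\<in>set xs. 2 \<le> a)"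

lemma hj_val_Cons_nonempty: "as \<noteq> [] \<Longrightarrow> hj_val (a # as) = of_int a - 1 / hj_val as"
  by (cases as) auto

lemma hj_val_gt_1: "hj_admissible xs \<Longrightarrow> 1 < hj_val xs"
proof (induction xs)
  case Nil
  then show ?case by (simp add: hj_admissible_def)
next
  case (Cons a as)
  show ?case
  proof (cases "as = []")
    case True
    then show ?thesis using Cons.prems by (simp add: hj_admissible_def)
  next
    case False
    then have "1 / hj_val as < 1" using Cons by (simp add: hj_admissible_def)
    moreover have "(2::rat) \<le> of_int a" using Cons.prems by (simp add: hj_admissible_def)
    ultimately show ?thesis using False by (simp add: hj_val_Cons_nonempty)
  qed
qed

lemma hj_val_Cons_bounds:
  assumes "hj_admissible (a # as)" and "as \<noteq> []"
  shows "of_int a - 1 < hj_val (a # as)" and "hj_val (a # as) < of_int a"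
proof -
  have "1 < hj_val as" using assms by (intro hj_val_gt_1) (simp add: hj_admissible_def)
  then show "of_int a - 1 < hj_val (a # as)" "hj_val (a # as) < of_int a"
    using assms(2) by (simp_all add: hj_val_Cons_nonempty)
qed

lemma ceiling_hj_val: "hj_admissible (a # as) \<Longrightarrow> \<lceil>hj_val (a # as)\<rceil> = a"
  by (cases "as = []") (auto intro!: ceiling_unique dest: hj_val_Cons_bounds)

lemma hj_val_inj:
  "hj_admissible xs \<Longrightarrow> hj_admissible ys \<Longrightarrow> hj_val xs = hj_val ys \<Longrightarrow> xs = ys"
proof (induction xs arbitrary: ys)
  case Nil
  then show ?case by (simp add: hj_admissible_def)
next
  case (Cons a as)
  obtain b bs where "ys = b # bs"
    using Cons.prems by (cases ys) (auto simp: hj_admissible_def)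
  moreover from this have "b = a" using Cons.prems ceiling_hj_val by metis
  ultimately have ys: "ys = a # bs" by simp
  show ?case
  proof (cases "as = []"; cases "bs = []")
    assume "as \<noteq> []" "bs \<noteq> []"
    then have "hj_val as = hj_val bs" using Cons.prems ys by (simp add: hj_val_Cons_nonempty)
    with Cons \<open>as \<noteq> []\<close> \<open>bs \<noteq> []\<close> show ?thesis
      by (simp add: ys hj_admissible_def)
  qed (use Cons.prems ys hj_val_Cons_bounds(2) in fastforce)+
qed

lemma hj_cf_eqI:
  assumes "hj_admissible xs" and "hj_val xs = of_int p / of_int q"
  shows "hj_cf p q = xs"
  unfolding hj_cf_def
proof (rule the_equality)
  show "xs \<noteq> [] \<and> (\<forall>a\<in>set xs. 2 \<le> a) \<and> hj_val xs = of_int p / of_int q"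
    using assms by (simp add: hj_admissible_def)
next
  fix ys assume "ys \<noteq> [] \<and> (\<forall>a\<in>set ys. 2 \<le> a) \<and> hj_val ys = of_int p / of_int q"
  then show "ys = xs" using assms hj_val_inj by (auto simp: hj_admissible_def)
qed

lemma hj_val_replicate_2:
  assumes "rest \<noteq> []" and "1 \<le> hj_val rest"
  shows "hj_val (replicate n 2 @ rest)
    = (of_nat (n + 1) * hj_val rest - of_nat n) / (of_nat n * (hj_val rest - 1) + 1)"
proof (induction n)
  case 0
  then show ?case by simp
next
  case (Suc n)
  define x where "x = hj_val rest"
  have "0 \<le> of_nat n * (x - 1)" using assms(2) by (simp add: x_def)
  then have nonzero: "of_nat (n + 1) * x - of_nat n \<noteq> 0" "of_nat n * (x - 1) + 1 \<noteq> 0"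
    using assms(2) by (simp_all add: x_def algebra_simps)
  have "hj_val (replicate (Suc n) 2 @ rest) = 2 - 1 / hj_val (replicate n 2 @ rest)"
    using assms(1) by (simp add: hj_val_Cons_nonempty)
  also have "\<dots> = 2 - (of_nat n * (x - 1) + 1) / (of_nat (n + 1) * x - of_nat n)"
    using Suc by (simp add: x_def)
  also have "\<dots> = (of_nat (Suc n + 1) * x - of_nat (Suc n)) / (of_nat (Suc n) * (x - 1) + 1)"
    using nonzero by (simp add: field_simps)
  finally show ?case by (simp add: x_def)
qed

lemma hj_cf_small:
  "hj_cf 2 1 = [2]" "hj_cf 3 2 = [2, 2]" "hj_cf 5 4 = [2, 2, 2, 2]" "hj_cf 3 1 = [3]" "hj_cf 5 1 = [5]"
  by (rule hj_cf_eqI; simp add: hj_admissible_def)+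

lemma hj_val_p4_q4:
  fixes k :: int
  assumes "0 \<le> k"
  shows "hj_val (replicate (nat k) 2 @ [2 + k, 9])
    = of_int (9 * k^2 + 17 * k + 17) / of_int (9 * k^2 + 8 * k + 9)"
proof -
  have tail: "hj_val [2 + k, 9] = (9 * of_int k + 17) / 9" by (simp add: field_simps)
  have "hj_val (replicate (nat k) 2 @ [2 + k, 9])
      = (of_int (k + 1) * ((9 * of_int k + 17) / 9) - of_int k)
        / (of_int k * ((9 * of_int k + 17) / 9 - 1) + 1)"
    using hj_val_replicate_2[of "[2 + k, 9]" "nat k"] assms by (simp only: tail) simp
  also have "\<dots> = (9 * of_int (9 * k^2 + 17 * k + 17)) / (9 * of_int (9 * k^2 + 8 * k + 9))"
    by (simp add: field_simps power2_eq_square)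
  also have "\<dots> = of_int (9 * k^2 + 17 * k + 17) / of_int (9 * k^2 + 8 * k + 9)"
    by (rule mult_divide_mult_cancel_left) simp
  finally show ?thesis .
qed

text \<open>The expansion of \<open>p\<^sub>4 / (p\<^sub>4 - q\<^sub>4)\<close>, where \<open>p\<^sub>4 - q\<^sub>4 = 9k + 8\<close>.\<close>
lemma hj_val_p4_dual:
  fixes k :: int
  assumes "1 \<le> k"
  shows "hj_val ((2 + k) # replicate (nat (k - 1)) 2 @ [3, 2, 2, 2, 2, 2, 2, 2])
    = of_int (9 * k^2 + 17 * k + 17) / of_int (9 * k + 8)"
proof -
  have tail: "hj_val [3, 2, 2, 2, 2, 2, 2, 2] = 17 / 8" by simp
  have nonzero: "(9 * of_int k - 1 :: rat) \<noteq> 0" "(9 * of_int k + 8 :: rat) \<noteq> 0"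
    using assms by linarith+
  have "hj_val (replicate (nat (k - 1)) 2 @ [3, 2, 2, 2, 2, 2, 2, 2])
      = (of_int k * (17 / 8) - of_int (k - 1)) / (of_int (k - 1) * (17 / 8 - 1) + 1)"
    using hj_val_replicate_2[of "[3, 2, 2, 2, 2, 2, 2, 2]" "nat (k - 1)"] assms
    by (simp only: tail) simp
  also have "\<dots> = (9 * of_int k + 8) / (9 * of_int k - 1)"
    using nonzero by (simp add: field_simps)
  finally have rest: "hj_val (replicate (nat (k - 1)) 2 @ [3, 2, 2, 2, 2, 2, 2, 2])
      = (9 * of_int k + 8) / (9 * of_int k - 1)" .
  show ?thesis
    using assms by (subst hj_val_Cons_nonempty) (simp_all add: rest field_simps power2_eq_square)
qed

lemma hj_cf_p4_q4:
  fixes k :: int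
  assumes "0 \<le> k"
  shows "hj_cf (9 * k^2 + 17 * k + 17) (9 * k^2 + 8 * k + 9) = replicate (nat k) 2 @ [2 + k, 9]"
  using assms by (intro hj_cf_eqI hj_val_p4_q4) (auto simp: hj_admissible_def)

lemma hj_cf_p4_dual:
  fixes k :: int
  assumes "1 \<le> k"
  shows "hj_cf (9 * k^2 + 17 * k + 17) (9 * k + 8)
    = (2 + k) # replicate (nat (k - 1)) 2 @ [3, 2, 2, 2, 2, 2, 2, 2]"
  using assms by (intro hj_cf_eqI hj_val_p4_dual) (auto simp: hj_admissible_def)

lemma inv_mod_eqI:
  assumes "0 < x" and "x < p" and "[q * x = 1] (mod p)"
  shows "inv_mod p q = x"
  unfolding inv_mod_def
proof (rule the_equality)
  fix y assume y: "0 < y \<and> y < p \<and> [q * y = 1] (mod p)"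
  have "[y * (q * x) = x * (q * y)] (mod p)" by (simp add: algebra_simps)
  then have "[y = x] (mod p)"
    using assms(3) y by (metis cong_scalar_left cong_sym cong_trans mult_1_right)
  then show "y = x" using assms y by (meson cong_less_imp_eq_int less_imp_le)
qed (use assms in auto)

lemma inv_mod_small: "inv_mod 2 1 = 1" "inv_mod 3 2 = 2" "inv_mod 5 4 = 4"
  by (rule inv_mod_eqI; simp add: cong_def)+

lemma inv_mod_p4_q4:
  fixes k :: int
  assumes "0 \<le> k"
  shows "inv_mod (9 * k^2 + 17 * k + 17) (9 * k^2 + 8 * k + 9) = k^2 + 2 * k + 2"
proof (rule inv_mod_eqI)
  have "0 \<le> k^2" by simp
  then show "0 < k^2 + 2 * k + 2" "k^2 + 2 * k + 2 < 9 * k^2 + 17 * k + 17"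
    using assms by linarith+
  have "(9 * k^2 + 8 * k + 9) * (k^2 + 2 * k + 2) = 1 + (9 * k^2 + 17 * k + 17) * (k^2 + k + 1)"
    by (simp add: algebra_simps power2_eq_square)
  then show "[(9 * k^2 + 8 * k + 9) * (k^2 + 2 * k + 2) = 1] (mod 9 * k^2 + 17 * k + 17)"
    by (simp add: cong_def)
qed

lemma gcd_p4_30:
  fixes k :: int
  assumes "k mod 3 \<noteq> 2"
  shows "gcd (9 * k^2 + 17 * k + 17) 30 = 1"
proof -
  define p where "p = 9 * k^2 + 17 * k + 17"
  have "[p = 9 * (k mod d)^2 + 17 * (k mod d) + 17] (mod d)" for d
    unfolding p_def by (intro cong_add cong_mult cong_pow cong_refl) (simp_all add: cong_def)
  then have p_mod: "p mod d = (9 * (k mod d)^2 + 17 * (k mod d) + 17) mod d" for d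
    by (simp add: cong_def)
  have "k mod 2 = 0 \<or> k mod 2 = 1" by auto
  then have "\<not> 2 dvd p" using p_mod[of 2] unfolding dvd_eq_mod_eq_0 by (elim disjE) simp_all
  moreover have "k mod 3 = 0 \<or> k mod 3 = 1" using assms by auto
  then have "\<not> 3 dvd p" using p_mod[of 3] unfolding dvd_eq_mod_eq_0 by (elim disjE) simp_all
  moreover have "k mod 5 = 0 \<or> k mod 5 = 1 \<or> k mod 5 = 2 \<or> k mod 5 = 3 \<or> k mod 5 = 4" by auto
  then have "\<not> 5 dvd p" using p_mod[of 5] unfolding dvd_eq_mod_eq_0 by (elim disjE) simp_all
  moreover have "prime (2::int)" "prime (3::int)" "prime (5::int)" by simp_all
  ultimately have "coprime 2 p" "coprime 3 p" "coprime 5 p"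
    by (simp_all add: prime_imp_coprime)
  then have "coprime (2 * 3 * 5) p" by (simp only: coprime_mult_left_iff)
  then show ?thesis by (simp add: p_def gcd.commute)
qed

lemma K2_p4_q4:
  fixes k :: int
  assumes "1 \<le> k"
  defines "p \<equiv> 9 * k^2 + 17 * k + 17" and "q \<equiv> 9 * k^2 + 8 * k + 9"
  shows "K2 [(2, 1), (3, 2), (5, 4), (p, q)]
    = (3 * k^2 + 139 * k + 154) / (15 * (9 * k^2 + 17 * k + 17))"
proof -
  have "hj_cf p (p - q) = (2 + k) # replicate (nat (k - 1)) 2 @ [3, 2, 2, 2, 2, 2, 2, 2]"
    using hj_cf_p4_dual[OF assms(1)] by (simp add: p_def q_def)
  then have "length (hj_cf p (p - q)) = nat k + 8" "sum_list (hj_cf p (p - q)) = 3 * k + 17"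
    using assms(1) by (simp_all add: sum_list_replicate)
  moreover have "0 < p" unfolding p_def using assms(1) by (simp add: add_pos_nonneg)
  moreover have "inv_mod p q = k^2 + 2 * k + 2"
    using inv_mod_p4_q4 assms(1) by (simp add: p_def q_def)
  ultimately have "K2 [(2, 1), (3, 2), (5, 4), (p, q)]
      = 9 - 3 * (3 + real (nat k + 8)) + (10 + of_int (3 * k + 17))
        - (2 / 3 + 6 / 5 + (of_int q + of_int (k^2 + 2 * k + 2) - 2) / of_int p)"
    by (simp add: K2_def hj_cf_small inv_mod_small)
  also have "\<dots> = 17 / 15 - (10 * of_int k^2 + 10 * of_int k + 9) / of_int p"
    using assms(1) by (simp add: q_def)
  also have "\<dots> = (17 * of_int p - 15 * (10 * of_int k^2 + 10 * of_int k + 9)) / (15 * of_int p)"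
    using \<open>0 < p\<close> by (simp add: field_simps)
  also have "\<dots> = (3 * k^2 + 139 * k + 154) / (15 * (9 * k^2 + 17 * k + 17))"
    by (simp add: p_def algebra_simps)
  finally show ?thesis .
qed

lemma e_orb_2_3_5:
  "3 * e_orb [(2, 1), (3, 2), (5, 4), (p, q)] = 1 / 10 + 3 / of_int p"
  by (simp add: e_orb_def)

text \<open>The upper bound amounts to \<open>21x\<^sup>2 - 227x - 167 > 0\<close>, which fails at \<open>x = 11\<close>.\<close>
lemma K2_formula_bounds:
  fixes x :: real
  assumes "12 \<le> x"
  defines "Q \<equiv> 9 * x^2 + 17 * x + 17"
  shows "0 < (3 * x^2 + 139 * x + 154) / (15 * Q)"
    and "(3 * x^2 + 139 * x + 154) / (15 * Q) < 1 / 10 + 3 / Q"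
proof -
  have x2: "12 * x \<le> x^2" using assms(1) by (simp add: power2_eq_square)
  then have Q_pos: "0 < Q" and key: "2 * (3 * x^2 + 139 * x + 154) < 3 * Q + 90"
    using assms(1) unfolding Q_def by (simp_all only: ring_distribs; linarith)+
  show "0 < (3 * x^2 + 139 * x + 154) / (15 * Q)"
    using assms(1) x2 Q_pos by (intro divide_pos_pos) linarith+
  have "(3 * x^2 + 139 * x + 154) / (15 * Q) = 2 * (3 * x^2 + 139 * x + 154) / (2 * (15 * Q))"
    by (rule mult_divide_mult_cancel_left [symmetric]) simp
  also have "\<dots> < (3 * Q + 90) / (2 * (15 * Q))"
    using key Q_pos by (intro divide_strict_right_mono) auto
  also have "\<dots> = 1 / 10 + 3 / Q"
    using Q_pos by (simp add: field_simps)
  finally show "(3 * x^2 + 139 * x + 154) / (15 * Q) < 1 / 10 + 3 / Q" .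
qed

definition dot :: "nat \<Rightarrow> (nat \<Rightarrow> int) \<Rightarrow> (nat \<Rightarrow> int) \<Rightarrow> int" where
  "dot N x y = (\<Sum>t<N. x t * y t)"

definition supp :: "nat \<Rightarrow> (nat \<Rightarrow> int) \<Rightarrow> nat set" where
  "supp N x = {t. t < N \<and> x t \<noteq> 0}"

lemma supp_subset: "supp N x \<subseteq> {..<N}"
  by (auto simp: supp_def)

lemma finite_supp [simp]: "finite (supp N x)"
  using supp_subset finite_subset by blast

lemma dot_commute: "dot N x y = dot N y x"
  by (simp add: dot_def mult.commute)

lemma dot_eq_sum_supp_Int: "dot N x y = (\<Sum>t\<in>supp N x \<inter> supp N y. x t * y t)"
  unfolding dot_def by (rule sum.mono_neutral_right) (auto simp: supp_def)

lemma abs_root_entry: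
  assumes "dot N x x = 2" and "t \<in> supp N x"
  shows "\<bar>x t\<bar> = 1"
proof -
  have "x t * x t \<le> dot N x x"
    unfolding dot_def using assms(2) by (intro member_le_sum) (auto simp: supp_def)
  then have "\<bar>x t\<bar> * \<bar>x t\<bar> \<le> 2" using assms(1) by (simp add: abs_mult_self_eq)
  then have "\<bar>x t\<bar> < 2" using mult_mono[of 2 "\<bar>x t\<bar>" 2 "\<bar>x t\<bar>"] by linarith
  moreover have "x t \<noteq> 0" using assms(2) by (simp add: supp_def)
  ultimately show ?thesis by linarith
qed

lemma card_supp_root:
  assumes "dot N x x = 2"
  shows "card (supp N x) = 2"
proof -
  have "(2::int) = (\<Sum>t\<in>supp N x. x t * x t)" using assms by (simp add: dot_eq_sum_supp_Int)
  also have "\<dots> = (\<Sum>t\<in>supp N x. 1)"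
    using abs_root_entry[OF assms] by (intro sum.cong) (simp_all add: abs_mult_self_eq[of "x _", symmetric])
  finally show ?thesis by simp
qed

text \<open>A root of \<open>-\<int>\<^sup>N\<close> is \<open>\<plusminus>e\<^sub>s \<plusminus> e\<^sub>t\<close>, so the parity of a product of two roots counts
  their common coordinates.\<close>
lemma odd_dot_roots_iff:
  assumes "dot N x x = 2" and "dot N y y = 2"
  shows "odd (dot N x y) \<longleftrightarrow> card (supp N x \<inter> supp N y) = 1"
proof -
  have "odd (u t)" if "dot N u u = 2" "t \<in> supp N u" for u t
    using abs_root_entry[OF that] by (cases "u t < 0") auto
  then have "{t \<in> supp N x \<inter> supp N y. odd (x t * y t)} = supp N x \<inter> supp N y"
    using assms by auto
  then have "even (dot N x y) \<longleftrightarrow> even (card (supp N x \<inter> supp N y))"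
    by (simp add: dot_eq_sum_supp_Int even_sum_iff)
  moreover have "card (supp N x \<inter> supp N y) \<le> 2"
    using card_mono[of "supp N x" "supp N x \<inter> supp N y"] card_supp_root[OF assms(1)] by auto
  ultimately show ?thesis by (auto simp: le_Suc_eq numeral_eq_Suc)
qed

text \<open>Orthogonal roots sharing a coordinate are \<open>e\<^sub>s \<plusminus> e\<^sub>t\<close> on the same two coordinates,
  so every third root meets both in the same number of coordinates.\<close>
lemma roots_supp_disjoint:
  assumes roots: "dot N x x = 2" "dot N z z = 2" "dot N w w = 2"
    and "dot N x z = 0" and "odd (dot N w x)" and "even (dot N w z)"
  shows "supp N x \<inter> supp N z = {}"
proof (rule ccontr)
  let ?I = "supp N x \<inter> supp N z"
  assume "?I \<noteq> {}"
  moreover have "card ?I \<noteq> 1" using odd_dot_roots_iff[of N x z] roots assms(4) by simp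
  moreover have "card ?I \<le> 2"
    using card_mono[of "supp N x" ?I] card_supp_root[OF roots(1)] by auto
  ultimately have "card ?I = card (supp N x)" "card ?I = card (supp N z)"
    using card_supp_root[OF roots(1)] card_supp_root[OF roots(2)]
    by (auto simp: le_Suc_eq numeral_eq_Suc)
  then have "?I = supp N x" "?I = supp N z"
    by (metis card_subset_eq finite_supp inf_le1 inf_le2)+
  then have "odd (dot N w x) \<longleftrightarrow> odd (dot N w z)"
    using odd_dot_roots_iff roots by metis
  with assms(5,6) show False by simp
qed

definition realizes_diagram :: "nat \<Rightarrow> (nat \<Rightarrow> nat \<Rightarrow> bool) \<Rightarrow> nat \<Rightarrow> (nat \<Rightarrow> nat \<Rightarrow> int) \<Rightarrow> bool" where
  "realizes_diagram N A n v \<longleftrightarrow>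
     (\<forall>i<n. \<forall>j<n. dot N (v i) (v j) = (if i = j then 2 else if A i j then -1 else 0))"

lemma realizes_diagram_mono:
  "realizes_diagram N A n v \<Longrightarrow> m \<le> n \<Longrightarrow> realizes_diagram N A m v"
  by (simp add: realizes_diagram_def)

lemma realizes_diagram_sym:
  assumes "realizes_diagram N A n v" and "i < n" and "j < n"
  shows "A i j \<longleftrightarrow> A j i"
proof -
  have "dot N (v i) (v j) = dot N (v j) (v i)" by (rule dot_commute)
  with assms show ?thesis by (auto simp: realizes_diagram_def split: if_splits)
qed

definition neighbours_separate :: "(nat \<Rightarrow> nat \<Rightarrow> bool) \<Rightarrow> nat \<Rightarrow> bool" where
  "neighbours_separate A n \<longleftrightarrow> (\<forall>i<n. \<forall>j<n. i \<noteq> j \<and> \<not> A i j \<longrightarrow> (\<exists>w<n. A w i \<noteq> A w j))"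

lemma realizes_diagram_supp_disjoint:
  assumes v: "realizes_diagram N A n v" and irrefl: "\<And>i. \<not> A i i"
    and sep: "neighbours_separate A n"
    and "i < n" "j < n" "i \<noteq> j" "\<not> A i j"
  shows "supp N (v i) \<inter> supp N (v j) = {}"
proof -
  obtain w where w: "w < n" "A w i \<noteq> A w j"
    using sep assms(4-7) unfolding neighbours_separate_def by blast
  then have "w \<noteq> i" "w \<noteq> j"
    using realizes_diagram_sym[OF v] irrefl assms(4,5,7) by metis+
  then have roots: "dot N (v i) (v i) = 2" "dot N (v j) (v j) = 2" "dot N (v w) (v w) = 2"
    and "dot N (v w) (v i) = (if A w i then -1 else 0)" "dot N (v w) (v j) = (if A w j then -1 else 0)"
    and "dot N (v i) (v j) = 0"
    using v w assms(4-7) by (simp_all add: realizes_diagram_def)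
  with w(2) roots_supp_disjoint[of N "v i" "v j" "v w"] roots_supp_disjoint[of N "v j" "v i" "v w"]
  show ?thesis by (cases "A w i") (auto simp: dot_commute)
qed

text \<open>The vertices \<open>0, 1, 2, \<dots>\<close> form consecutive paths, a new path starting at each element
  of \<open>B\<close>.\<close>
definition chain_adj :: "nat set \<Rightarrow> nat \<Rightarrow> nat \<Rightarrow> bool" where
  "chain_adj B i j \<longleftrightarrow> (i + 1 = j \<and> j \<notin> B) \<or> (j + 1 = i \<and> i \<notin> B)"

lemma chain_adj_irrefl: "\<not> chain_adj B i i"
  by (simp add: chain_adj_def)

lemma chain_adj_commute: "chain_adj B i j \<longleftrightarrow> chain_adj B j i"
  by (auto simp: chain_adj_def)

lemma card_new_supp_chain_root:
  assumes v: "realizes_diagram N (chain_adj B) (Suc n) v"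
    and disj: "\<And>i. i < n \<Longrightarrow> \<not> chain_adj B i n \<Longrightarrow> supp N (v i) \<inter> supp N (v n) = {}"
  shows "(if n \<in> B then 2 else 1) \<le> card (supp N (v n) - (\<Union>i<n. supp N (v i)))"
proof -
  let ?S = "supp N (v n)" and ?U = "\<Union>i<n. supp N (v i)"
  have roots: "dot N (v i) (v i) = 2" if "i \<le> n" for i
    using v that by (simp add: realizes_diagram_def)
  have card_S: "card ?S = 2" using card_supp_root roots by blast
  have old: "i + 1 = n \<and> n \<notin> B" if "t \<in> ?S" "t \<in> supp N (v i)" "i < n" for t i
    using disj[of i] that by (auto simp: chain_adj_def)
  show ?thesis
  proof (cases "n \<notin> B \<and> 0 < n")
    case True
    have "dot N (v n) (v (n - 1)) = -1"
      using v True by (auto simp: realizes_diagram_def chain_adj_def)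
    then have "card (?S \<inter> supp N (v (n - 1))) = 1"
      using odd_dot_roots_iff[of N "v n" "v (n - 1)"] roots[of n] roots[of "n - 1"] by simp
    moreover have "?S \<inter> ?U \<subseteq> ?S \<inter> supp N (v (n - 1))"
      using old by fastforce
    ultimately have "card (?S \<inter> ?U) \<le> 1"
      by (metis card_mono finite_Int finite_supp)
    then show ?thesis
      using True card_S card_Diff_subset_Int[of ?S ?U] by simp
  next
    case False
    then have "?S \<inter> ?U = {}" using old by fastforce
    then show ?thesis using card_S by (simp add: Diff_triv)
  qed
qed

lemma card_supp_chain_roots:
  assumes v: "realizes_diagram N (chain_adj B) n v"
    and disj: "\<And>i j. i < n \<Longrightarrow> j < n \<Longrightarrow> i \<noteq> j \<Longrightarrow> \<not> chain_adj B i j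
      \<Longrightarrow> supp N (v i) \<inter> supp N (v j) = {}"
  shows "n + card (B \<inter> {..<n}) \<le> card (\<Union>i<n. supp N (v i))"
proof -
  have "m + card (B \<inter> {..<m}) \<le> card (\<Union>i<m. supp N (v i))" if "m \<le> n" for m
    using that
  proof (induction m)
    case 0
    then show ?case by simp
  next
    case (Suc m)
    let ?U = "\<Union>i<m. supp N (v i)"
    have "realizes_diagram N (chain_adj B) (Suc m) v"
      using v Suc.prems by (rule realizes_diagram_mono)
    then have "(if m \<in> B then 2 else 1) \<le> card (supp N (v m) - ?U)"
      by (rule card_new_supp_chain_root) (use disj Suc.prems in simp)
    moreover have "(\<Union>i<Suc m. supp N (v i)) = ?U \<union> (supp N (v m) - ?U)"
      by (auto simp: lessThan_Suc)
    moreover have "card (?U \<union> (supp N (v m) - ?U)) = card ?U + card (supp N (v m) - ?U)"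
      by (rule card_Un_disjoint) auto
    moreover have "card (B \<inter> {..<Suc m}) = card (B \<inter> {..<m}) + (if m \<in> B then 1 else 0)"
      by (simp add: lessThan_Suc)
    ultimately show ?case using Suc by (simp split: if_splits)
  qed
  then show ?thesis by simp
qed

text \<open>The bound makes the last path have at least four vertices: in a path of three vertices
  the two ends have the same neighbours.\<close>
lemma neighbours_separate_chain_0_1_3_7:
  assumes "11 \<le> n"
  shows "neighbours_separate (chain_adj {0, 1, 3, 7}) n"
proof -
  let ?A = "chain_adj {0, 1, 3, 7}"
  have sep: "\<exists>w<n. ?A w i \<noteq> ?A w j" if "i < j" "j < n" "\<not> ?A i j" for i j
  proof (cases "i \<in> {0, 1, 3, 7}")
    case False
    then show ?thesis using that by (intro exI[of _ "i - 1"]) (auto simp: chain_adj_def)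
  next
    case i: True
    show ?thesis
    proof (cases "j + 1 < n \<and> j + 1 \<notin> {1, 3, 7}")
      case True
      then show ?thesis using that by (intro exI[of _ "j + 1"]) (auto simp: chain_adj_def)
    next
      case False
      then have "j + 1 = n \<or> j \<in> {0, 2, 6}" using that(2) by auto
      then have "j \<notin> {0, 1, 3, 7}" "i + 2 = j \<longrightarrow> j = 2"
        using that(1) i assms by auto
      then show ?thesis using that(1,2) by (intro exI[of _ "j - 1"]) (auto simp: chain_adj_def)
    qed
  qed
  show ?thesis
    unfolding neighbours_separate_def
  proof (intro allI impI)
    fix i j assume "i < n" "j < n" "i \<noteq> j \<and> \<not> ?A i j"
    then consider "i < j" "\<not> ?A i j" | "j < i" "\<not> ?A j i"
      by (cases "i < j") (auto simp: chain_adj_commute)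
    then show "\<exists>w<n. ?A w i \<noteq> ?A w j"
      using sep \<open>i < n\<close> \<open>j < n\<close> by cases metis+
  qed
qed

lemma realizes_chain_0_1_3_7_dim_ge:
  assumes v: "realizes_diagram N (chain_adj {0, 1, 3, 7}) n v" and "11 \<le> n"
  shows "n + 4 \<le> N"
proof -
  have "supp N (v i) \<inter> supp N (v j) = {}"
    if "i < n" "j < n" "i \<noteq> j" "\<not> chain_adj {0, 1, 3, 7} i j" for i j
    using that neighbours_separate_chain_0_1_3_7[OF assms(2)] chain_adj_irrefl
    by (intro realizes_diagram_supp_disjoint[OF v])
  then have "n + card ({0, 1, 3, 7} \<inter> {..<n}) \<le> card (\<Union>i<n. supp N (v i))"
    by (intro card_supp_chain_roots[OF v])
  also have "\<dots> \<le> card {..<N}"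
    using supp_subset by (intro card_mono) auto
  finally have "n + card ({0, 1, 3, 7} \<inter> {..<n}) \<le> N" by simp
  moreover have "{0, 1, 3, 7} \<inter> {..<n} = {0, 1, 3, 7}" using assms(2) by auto
  ultimately show ?thesis by simp
qed

lemma dot_neg_std:
  "(\<Sum>s<N. \<Sum>t<N. x s * (if s = t then -1 else 0) * y t) = - dot N x y"
proof -
  have "(\<Sum>t<N. x s * (if s = t then -1 else 0) * y t) = (\<Sum>t<N. if s = t then - (x s * y t) else 0)"
    for s by (intro sum.cong) auto
  then show ?thesis by (simp add: dot_def sum_negf)
qed

lemma not_lattice_embeds_neg_std:
  assumes "11 \<le> n" and "n \<le> fst L" and "N < n + 4"
    and gram: "\<And>i j. i < n \<Longrightarrow> j < n
      \<Longrightarrow> snd L i j = (if i = j then -2 else if chain_adj {0, 1, 3, 7} i j then 1 else 0)"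
  shows "\<not> lattice_embeds L (neg_std N)"
proof
  assume "lattice_embeds L (neg_std N)"
  then obtain E where E: "\<forall>i<fst L. \<forall>j<fst L. - dot N (E i) (E j) = snd L i j"
    by (cases L) (auto simp: lattice_embeds_def neg_std_def dot_neg_std)
  have "dot N (E i) (E j) = - snd L i j" if "i < n" "j < n" for i j
    using E[rule_format, of i j] assms(2) that by simp
  then have "realizes_diagram N (chain_adj {0, 1, 3, 7}) n E"
    by (simp add: realizes_diagram_def gram)
  then show False
    using realizes_chain_0_1_3_7_dim_ge assms(1,3) by fastforce
qed

lemma fst_orth_sum: "fst (X \<oplus>\<^sub>L Y) = fst X + fst Y"
  by (cases X; cases Y) (simp add: orth_sum_def)

lemma snd_orth_sum:
  "snd (X \<oplus>\<^sub>L Y) i j = (if i < fst X \<and> j < fst X then snd X i j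
     else if fst X \<le> i \<and> fst X \<le> j then snd Y (i - fst X) (j - fst X) else 0)"
  by (cases X; cases Y) (simp add: orth_sum_def)

lemma fst_QX: "fst (QX p q) = length (hj_cf p q)"
  by (simp add: QX_def Let_def)

lemma snd_QX:
  "snd (QX p q) i j = (if i = j then - (hj_cf p q ! i) else if i + 1 = j \<or> j + 1 = i then 1 else 0)"
  by (simp add: QX_def Let_def)

lemma gram_QX_2_3_5:
  "\<forall>i<7. \<forall>j<7. snd (QX 2 1 \<oplus>\<^sub>L QX 3 2 \<oplus>\<^sub>L QX 5 4) i j
     = (if i = j then -2 else if chain_adj {0, 1, 3, 7} i j then 1 else 0)"
  by (simp add: fst_orth_sum snd_orth_sum fst_QX snd_QX hj_cf_small chain_adj_def
      numeral_eq_Suc All_less_Suc)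

lemma gram_QX_sum_p4_q4:
  fixes k :: int
  assumes "0 \<le> k"
  defines "L \<equiv> QX 2 1 \<oplus>\<^sub>L QX 3 2 \<oplus>\<^sub>L QX 5 4 \<oplus>\<^sub>L QX (9 * k^2 + 17 * k + 17) (9 * k^2 + 8 * k + 9)"
  shows "fst L = nat k + 9"
    and "\<And>i j. i < nat k + 7 \<Longrightarrow> j < nat k + 7
      \<Longrightarrow> snd L i j = (if i = j then -2 else if chain_adj {0, 1, 3, 7} i j then 1 else 0)"
proof -
  note cf = hj_cf_p4_q4[OF assms(1)]
  have fst_small: "fst (QX 2 1 \<oplus>\<^sub>L QX 3 2 \<oplus>\<^sub>L QX 5 4) = 7"
    by (simp add: fst_orth_sum fst_QX hj_cf_small)
  show "fst L = nat k + 9"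
    by (simp add: L_def fst_orth_sum fst_QX cf hj_cf_small)
  fix i j assume ij: "i < nat k + 7" "j < nat k + 7"
  consider "i < 7" "j < 7" | "7 \<le> i" "7 \<le> j" | "i < 7 \<longleftrightarrow> 7 \<le> j"
    by linarith
  then show "snd L i j = (if i = j then -2 else if chain_adj {0, 1, 3, 7} i j then 1 else 0)"
  proof cases
    case 1
    then show ?thesis using gram_QX_2_3_5 by (simp add: L_def snd_orth_sum fst_small)
  next
    case 2
    then have "(replicate (nat k) 2 @ [2 + k, 9]) ! (i - 7) = 2"
      using ij by (simp add: nth_append)
    then show ?thesis
      using 2 ij by (auto simp: L_def snd_orth_sum fst_small snd_QX cf chain_adj_def)
  next
    case 3
    then show ?thesis by (auto simp: L_def snd_orth_sum fst_small chain_adj_def)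
  qed
qed

theorem mainTheorem3:
  fixes k :: int
  assumes "k \<ge> 12" and "k mod 3 \<noteq> 2"
  defines "p4 \<equiv> 9 * k^2 + 17 * k + 17"
      and "q4 \<equiv> 9 * k^2 + 8 * k + 9"
  shows "hj_val (replicate (nat k) 2 @ [2 + k, 9]) = of_int p4 / of_int q4
    \<and> inv_mod p4 q4 = k^2 + 2 * k + 2
    \<and> gcd p4 30 = 1
    \<and> K2 [(2, 1), (3, 2), (5, 4), (p4, q4)] = (3 * k^2 + 139 * k + 154) / (15 * (9 * k^2 + 17 * k + 17))
    \<and> 0 < K2 [(2, 1), (3, 2), (5, 4), (p4, q4)] \<and> K2 [(2, 1), (3, 2), (5, 4), (p4, q4)] < 3 * e_orb [(2, 1), (3, 2), (5, 4), (p4, q4)]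
    \<and> 3 * e_orb [(2, 1), (3, 2), (5, 4), (p4, q4)] = 1 / 10 + 3 / of_int p4
    \<and> \<not> lattice_embeds (QX 2 1 \<oplus>\<^sub>L QX 3 2 \<oplus>\<^sub>L QX 5 4 \<oplus>\<^sub>L QX p4 q4) (neg_std (nat (k + 10)))"
proof -
  have k: "0 \<le> k" "1 \<le> k" using assms(1) by simp_all
  have K2_eq: "K2 [(2, 1), (3, 2), (5, 4), (p4, q4)]
      = (3 * k^2 + 139 * k + 154) / (15 * (9 * k^2 + 17 * k + 17))"
    unfolding p4_def q4_def by (rule K2_p4_q4[OF k(2)])
  have "0 < K2 [(2, 1), (3, 2), (5, 4), (p4, q4)]
      \<and> K2 [(2, 1), (3, 2), (5, 4), (p4, q4)] < 3 * e_orb [(2, 1), (3, 2), (5, 4), (p4, q4)]"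
    unfolding K2_eq e_orb_2_3_5 unfolding p4_def using K2_formula_bounds[of "of_int k"] assms(1) by simp
  moreover have "\<not> lattice_embeds (QX 2 1 \<oplus>\<^sub>L QX 3 2 \<oplus>\<^sub>L QX 5 4 \<oplus>\<^sub>L QX p4 q4) (neg_std (nat (k + 10)))"
    unfolding p4_def q4_def
    by (rule not_lattice_embeds_neg_std[of "nat k + 7"])
      (use gram_QX_sum_p4_q4[OF k(1)] assms(1) in auto)
  ultimately show ?thesis
    using K2_eq hj_val_p4_q4[OF k(1)] inv_mod_p4_q4[OF k(1)] gcd_p4_30[OF assms(2)]
    by (simp add: e_orb_2_3_5 p4_def q4_def)
qed

end
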